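(* Assume $\alpha=2$, the far-destination approximation (every relay–destination distance equals $d$), and condition on $N\ge1$. Let $i^*$ be the relay closest to the source; conditioned on $N\ge1$, its distance $d_{i^*}$ has density $f(r)=2\zeta\pi\lambda r e^{-\pi\lambda r^2}$ on $[0,R_{\mathcal D}]$ with $\zeta=1/(1-e^{-\pi\lambda R_{\mathcal D}^2})$. Define $$\mathcal{P}_2(P)=\mathcal{P}\big(x_0+\eta y_{i^*}(x_{i^*}-\epsilon)<\epsilon,\ x_{i^*}>\epsilon\big)+\mathcal{P}\big(x_0<\epsilon,\ x_{i^*}<\epsilon\big),$$ with $x_{i^*}=|h_{i^*}|^2/(1+d_{i^*}^2)$, $y_{i^*}=|g_{i^*}|^2/(1+d^2)$. Then the diversity gain of this selection scheme is $2$: $-\lim_{P\to\infty}\frac{\log\mathcal{P}_2(P)}{\log P}=2$.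
   Context: Source at origin, destination at distance $d>0$; relays form a homogeneous Poisson point process of intensity $\lambda>0$ in the disc of radius $R_{\mathcal D}$ centred at the source. Fading $h_d,h_{i^*},g_{i^*}$ independent $\mathcal{CN}(0,1)$, independent of locations; $x_0=|h_d|^2/(1+d^2)$. $\tau=2^{2R}-1$ for target rate $R>0$, $\epsilon=\tau/P$ with transmit power $P$, $\eta\in(0,1]$ energy harvesting efficiency. Relay decodes iff $x_{i^*}>\epsilon$ and forwards with harvested power $\eta(Px_{i^*}-\tau)$; outage when combined SNR $P(x_0+\eta y_{i^*}(x_{i^*}-\epsilon))<\tau$. *)

theory Defs
  imports "HOL-Probability.Probability"
begin

definition zeta :: "real \<Rightarrow> real \<Rightarrow> real" where
  "zeta lam RD = 1 / (1 - exp (- pi * lam * RD\<^sup>2))"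

definition nearest_density :: "real \<Rightarrow> real \<Rightarrow> real \<Rightarrow> real" where
  "nearest_density lam RD r =
     (if 0 \<le> r \<and> r \<le> RD then 2 * zeta lam RD * pi * lam * r * exp (- pi * lam * r\<^sup>2) else 0)"

text \<open>Joint law of (|h_d|^2, |h_{i*}|^2, |g_{i*}|^2, d_{i*}): three independent Exp(1)
  variables (squared moduli of CN(0,1) fading) independent of the distance d_{i*}.\<close>
definition joint_law :: "real \<Rightarrow> real \<Rightarrow> (real \<times> real \<times> real \<times> real) measure" where
  "joint_law lam RD =
     density (lborel \<Otimes>\<^sub>M (lborel \<Otimes>\<^sub>M (lborel \<Otimes>\<^sub>M lborel)))
       (\<lambda>(a, b, c, r). ennreal (exponential_density 1 a * exponential_density 1 b
                                  * exponential_density 1 c * nearest_density lam RD r))"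

definition eps_of :: "real \<Rightarrow> real \<Rightarrow> real" where
  "eps_of Rt P = (2 powr (2 * Rt) - 1) / P"

text \<open>P_2(P) with x_0 = a/(1+d^2), x_{i*} = b/(1+r^2), y_{i*} = c/(1+d^2).\<close>
definition P2 :: "real \<Rightarrow> real \<Rightarrow> real \<Rightarrow> real \<Rightarrow> real \<Rightarrow> real \<Rightarrow> real" where
  "P2 lam RD d eta Rt P =
     measure (joint_law lam RD)
       {(a, b, c, r). a / (1 + d\<^sup>2) + eta * (c / (1 + d\<^sup>2)) * (b / (1 + r\<^sup>2) - eps_of Rt P) < eps_of Rt P
                     \<and> b / (1 + r\<^sup>2) > eps_of Rt P}
   + measure (joint_law lam RD)
       {(a, b, c, r). a / (1 + d\<^sup>2) < eps_of Rt P \<and> b / (1 + r\<^sup>2) < eps_of Rt P}"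

end

theory Submission
  imports Defs "HOL-Real_Asymp.Real_Asymp"
begin

text \<open>
  Write \<open>e = \<epsilon> = \<tau>/P\<close>. The distance density is bounded by a constant \<open>G\<close> on
  \<open>[0, R\<^sub>D]\<close> and from below by some \<open>g > 0\<close> on \<open>[R\<^sub>D/2, R\<^sub>D]\<close>, and the
  exponential densities are at most 1, so both outage events can be estimated by elementary
  integrals. In either event \<open>|h\<^sub>d|\<^sup>2 \<le> (1 + d\<^sup>2) e\<close>. If the relay does not decode,
  also \<open>|h\<^sub>i\<^sub>*|\<^sup>2 \<le> (1 + R\<^sub>D\<^sup>2) e\<close>, giving probability \<open>O(e\<^sup>2)\<close>; if it decodes,
  \<open>|g\<^sub>i\<^sub>*|\<^sup>2 (|h\<^sub>i\<^sub>*|\<^sup>2 - s) < t\<close> with \<open>s, t = O(e)\<close>, a region under a hyperbola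
  of \<open>Exp(1) \<otimes> Exp(1)\<close>-measure at most \<open>s + 2t - t ln t\<close>. Hence
  \<open>P\<^sub>2 = O(e\<^sup>2 ln (1/e))\<close>, while the box \<open>[0, e)\<^sup>2 \<times> \<real> \<times> [R\<^sub>D/2, R\<^sub>D]\<close>
  inside the second event gives \<open>P\<^sub>2 = \<Omega>(e\<^sup>2)\<close>, so \<open>ln P\<^sub>2 / ln P \<rightarrow> -2\<close>.
\<close>

lemma nn_integral_pair_measure_iterated:
  fixes g :: "'a \<times> 'b \<Rightarrow> ennreal"
  assumes "sigma_finite_measure N" "g \<in> borel_measurable (M \<Otimes>\<^sub>M N)"
  shows "(\<integral>\<^sup>+z. g z \<partial>(M \<Otimes>\<^sub>M N)) = (\<integral>\<^sup>+x. \<integral>\<^sup>+y. g (x, y) \<partial>N \<partial>M)"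
  using sigma_finite_measure.nn_integral_fst[OF assms] by simp

lemma nn_integral_pair_measure_times:
  fixes F :: "'a \<Rightarrow> ennreal" and G :: "'b \<Rightarrow> ennreal"
  assumes "sigma_finite_measure N" and [measurable]: "F \<in> borel_measurable M" "G \<in> borel_measurable N"
  shows "(\<integral>\<^sup>+(x, y). F x * G y \<partial>(M \<Otimes>\<^sub>M N)) = (\<integral>\<^sup>+x. F x \<partial>M) * (\<integral>\<^sup>+y. G y \<partial>N)"
proof -
  have "(\<integral>\<^sup>+(x, y). F x * G y \<partial>(M \<Otimes>\<^sub>M N)) = (\<integral>\<^sup>+x. \<integral>\<^sup>+y. F x * G y \<partial>N \<partial>M)"
    by (subst nn_integral_pair_measure_iterated[OF assms(1)]) auto
  also have "\<dots> = (\<integral>\<^sup>+x. F x * (\<integral>\<^sup>+y. G y \<partial>N) \<partial>M)"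
    by (simp add: nn_integral_cmult)
  also have "\<dots> = (\<integral>\<^sup>+x. F x \<partial>M) * (\<integral>\<^sup>+y. G y \<partial>N)"
    by (simp add: nn_integral_multc)
  finally show ?thesis .
qed

abbreviation lborel2 :: "(real \<times> real) measure" where
  "lborel2 \<equiv> lborel \<Otimes>\<^sub>M lborel"

abbreviation lborel4 :: "(real \<times> real \<times> real \<times> real) measure" where
  "lborel4 \<equiv> lborel \<Otimes>\<^sub>M (lborel \<Otimes>\<^sub>M lborel2)"

lemma nn_integral_lborel4_times:
  fixes F R :: "real \<Rightarrow> ennreal" and H :: "real \<times> real \<Rightarrow> ennreal"
  assumes [measurable]: "F \<in> borel_measurable borel" "H \<in> borel_measurable lborel2"
    "R \<in> borel_measurable borel"
  shows "(\<integral>\<^sup>+(a, b, c, r). F a * H (b, c) * R r \<partial>lborel4)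
    = (\<integral>\<^sup>+a. F a \<partial>lborel) * (\<integral>\<^sup>+x. H x \<partial>lborel2) * (\<integral>\<^sup>+r. R r \<partial>lborel)"
proof -
  have sf: "sigma_finite_measure (lborel \<Otimes>\<^sub>M lborel2)" "sigma_finite_measure lborel2"
    by (simp_all add: lborel_prod lborel.sigma_finite_measure_axioms)
  have HR: "(\<integral>\<^sup>+(b, c, r). H (b, c) * R r \<partial>(lborel \<Otimes>\<^sub>M lborel2))
      = (\<integral>\<^sup>+x. H x \<partial>lborel2) * (\<integral>\<^sup>+r. R r \<partial>lborel)"
  proof -
    have "(\<integral>\<^sup>+(b, c, r). H (b, c) * R r \<partial>(lborel \<Otimes>\<^sub>M lborel2))
        = (\<integral>\<^sup>+b. \<integral>\<^sup>+(c, r). H (b, c) * R r \<partial>lborel2 \<partial>lborel)"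
      by (subst nn_integral_pair_measure_iterated[OF sf(2)]) (auto simp: split_beta')
    also have "\<dots> = (\<integral>\<^sup>+b. (\<integral>\<^sup>+c. H (b, c) \<partial>lborel) * (\<integral>\<^sup>+r. R r \<partial>lborel) \<partial>lborel)"
      by (intro nn_integral_cong nn_integral_pair_measure_times lborel.sigma_finite_measure_axioms)
        auto
    also have "\<dots> = (\<integral>\<^sup>+x. H x \<partial>lborel2) * (\<integral>\<^sup>+r. R r \<partial>lborel)"
      by (simp add: nn_integral_multc nn_integral_pair_measure_iterated
          lborel.sigma_finite_measure_axioms)
    finally show ?thesis .
  qed
  have "(\<integral>\<^sup>+(a, b, c, r). F a * H (b, c) * R r \<partial>lborel4)
      = (\<integral>\<^sup>+(a, w). F a * (\<lambda>(b, c, r). H (b, c) * R r) w \<partial>lborel4)"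
    by (simp add: split_beta' mult.assoc)
  also have "\<dots> = (\<integral>\<^sup>+a. F a \<partial>lborel) * (\<integral>\<^sup>+(b, c, r). H (b, c) * R r \<partial>(lborel \<Otimes>\<^sub>M lborel2))"
    by (rule nn_integral_pair_measure_times[OF sf(1)]) auto
  finally show ?thesis by (simp add: HR mult.assoc)
qed

lemma Collect_in_sets_if_pred:
  assumes "space M = UNIV" "Measurable.pred M P"
  shows "Collect P \<in> sets M"
  using predE[OF assms(2)] assms(1) by simp

lemma nn_integral_exponential_density:
  "0 < l \<Longrightarrow> (\<integral>\<^sup>+x. ennreal (exponential_density l x) \<partial>lborel) = 1"
  using prob_space.emeasure_space_1[OF prob_space_exponential_density, of l]
  by (simp add: emeasure_density)

lemma exponential_density_eq_0: "x < 0 \<Longrightarrow> exponential_density l x = 0"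
  by (simp add: exponential_density_def)

lemma exponential_density_1_le_1: "exponential_density 1 x \<le> 1"
  by (simp add: exponential_density_def)

lemma exp_minus_1_le_exponential_density_1:
  "0 \<le> x \<Longrightarrow> x \<le> 1 \<Longrightarrow> exp (-1) \<le> exponential_density 1 x"
  by (simp add: exponential_density_def)

lemma zeta_pos: "0 < lam \<Longrightarrow> 0 < RD \<Longrightarrow> 0 < zeta lam RD"
  unfolding zeta_def by (simp add: field_simps)

lemma borel_measurable_nearest_density [measurable]:
  "nearest_density lam RD \<in> borel_measurable borel"
  unfolding nearest_density_def by measurable

lemma nearest_density_nonneg: "0 < lam \<Longrightarrow> 0 < RD \<Longrightarrow> 0 \<le> nearest_density lam RD r"
  using zeta_pos[of lam RD] by (simp add: nearest_density_def)

lemma nearest_density_eq_0: "\<not> (0 \<le> r \<and> r \<le> RD) \<Longrightarrow> nearest_density lam RD r = 0"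
  unfolding nearest_density_def by (rule if_not_P)

lemma nonneg_if_nearest_density_le: "(\<And>r. nearest_density lam RD r \<le> G) \<Longrightarrow> 0 \<le> G"
  by (metis nearest_density_def mult_zero_right mult_zero_left order_refl)

lemma nearest_density_bounded:
  assumes "0 < lam" "0 < RD"
  obtains G where "0 < G" "\<And>r. nearest_density lam RD r \<le> G"
proof
  have z: "0 < zeta lam RD" using zeta_pos assms by auto
  then show "0 < 2 * zeta lam RD * pi * lam * RD" using assms by simp
  fix r
  show "nearest_density lam RD r \<le> 2 * zeta lam RD * pi * lam * RD"
  proof (cases "0 \<le> r \<and> r \<le> RD")
    case True
    have "2 * zeta lam RD * pi * lam * r * exp (- pi * lam * r\<^sup>2) \<le> 2 * zeta lam RD * pi * lam * RD * 1"
      using True z assms by (intro mult_mono) auto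
    then show ?thesis using True by (simp add: nearest_density_def)
  qed (use z assms in \<open>simp add: nearest_density_eq_0\<close>)
qed

lemma nearest_density_bounded_below:
  assumes "0 < lam" "0 < RD"
  obtains g where "0 < g" "\<And>r. RD / 2 \<le> r \<Longrightarrow> r \<le> RD \<Longrightarrow> g \<le> nearest_density lam RD r"
proof
  have z: "0 < zeta lam RD" using zeta_pos assms by auto
  then show "0 < 2 * zeta lam RD * pi * lam * (RD / 2) * exp (- pi * lam * RD\<^sup>2)"
    using assms by simp
  fix r assume r: "RD / 2 \<le> r" "r \<le> RD"
  have "exp (- pi * lam * RD\<^sup>2) \<le> exp (- pi * lam * r\<^sup>2)"
    using r assms by (simp add: power_mono)
  then have "2 * zeta lam RD * pi * lam * (RD / 2) * exp (- pi * lam * RD\<^sup>2)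
      \<le> 2 * zeta lam RD * pi * lam * r * exp (- pi * lam * r\<^sup>2)"
    using z assms r by (intro mult_mono) auto
  then show "2 * zeta lam RD * pi * lam * (RD / 2) * exp (- pi * lam * RD\<^sup>2) \<le> nearest_density lam RD r"
    using r assms by (simp add: nearest_density_def)
qed

abbreviation joint_density :: "real \<Rightarrow> real \<Rightarrow> real \<times> real \<times> real \<times> real \<Rightarrow> ennreal" where
  "joint_density lam RD \<equiv> (\<lambda>(a, b, c, r). ennreal (exponential_density 1 a * exponential_density 1 b
      * exponential_density 1 c * nearest_density lam RD r))"

lemma emeasure_joint_law:
  "S \<in> sets lborel4 \<Longrightarrow>
    emeasure (joint_law lam RD) S = (\<integral>\<^sup>+z. joint_density lam RD z * indicator S z \<partial>lborel4)"
  unfolding joint_law_def by (rule emeasure_density) (measurable, simp)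

lemma emeasure_joint_law_le:
  fixes H :: "real \<times> real \<Rightarrow> ennreal"
  assumes "0 < lam" "0 < RD" and S: "S \<in> sets lborel4" and "0 \<le> \<alpha>"
    and [measurable]: "H \<in> borel_measurable lborel2"
    and G: "\<And>r. nearest_density lam RD r \<le> G"
    and envelope: "\<And>a b c r. (a, b, c, r) \<in> S \<Longrightarrow> 0 \<le> a \<Longrightarrow> 0 \<le> b \<Longrightarrow> 0 \<le> c \<Longrightarrow> 0 \<le> r \<Longrightarrow> r \<le> RD
      \<Longrightarrow> a \<le> \<alpha> \<and> ennreal (exponential_density 1 b * exponential_density 1 c) \<le> H (b, c)"
  shows "emeasure (joint_law lam RD) S \<le> ennreal \<alpha> * (\<integral>\<^sup>+x. H x \<partial>lborel2) * ennreal (G * RD)"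
proof -
  have G0: "0 \<le> G" using nonneg_if_nearest_density_le[OF G] .
  have "emeasure (joint_law lam RD) S = (\<integral>\<^sup>+z. joint_density lam RD z * indicator S z \<partial>lborel4)"
    by (rule emeasure_joint_law[OF S])
  also have "\<dots> \<le> (\<integral>\<^sup>+(a, b, c, r). indicator {0..\<alpha>} a * H (b, c) * (ennreal G * indicator {0..RD} r) \<partial>lborel4)"
  proof -
    have pointwise: "joint_density lam RD (a, b, c, r) * indicator S (a, b, c, r)
        \<le> indicator {0..\<alpha>} a * H (b, c) * (ennreal G * indicator {0..RD} r)" for a b c r
    proof (cases "(a, b, c, r) \<in> S \<and> 0 \<le> a \<and> 0 \<le> b \<and> 0 \<le> c \<and> 0 \<le> r \<and> r \<le> RD")
      case False
      then show ?thesis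
        using exponential_density_eq_0[of a] exponential_density_eq_0[of b]
          exponential_density_eq_0[of c] nearest_density_eq_0[of r RD lam]
        by (auto simp: not_le)
    next
      case True
      with envelope have a: "a \<le> \<alpha>" and H: "ennreal (exponential_density 1 b * exponential_density 1 c) \<le> H (b, c)"
        by blast+
      have "exponential_density 1 a * exponential_density 1 b * exponential_density 1 c * nearest_density lam RD r
          \<le> 1 * exponential_density 1 b * exponential_density 1 c * G"
        using assms(1,2) G by (intro mult_mono)
          (auto simp: exponential_density_nonneg exponential_density_1_le_1 nearest_density_nonneg)
      then have "joint_density lam RD (a, b, c, r) \<le> ennreal (exponential_density 1 b * exponential_density 1 c) * ennreal G"
        by (simp add: ennreal_mult' [symmetric] G0 ennreal_leI)
      also have "\<dots> \<le> H (b, c) * ennreal G" by (intro mult_right_mono H) simp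
      finally show ?thesis using True a by (simp add: mult.commute)
    qed
    then show ?thesis by (intro nn_integral_mono) (simp add: split_paired_all)
  qed
  also have "\<dots> = ennreal \<alpha> * (\<integral>\<^sup>+x. H x \<partial>lborel2) * ennreal (G * RD)"
    using assms(2,4) G0 by (subst nn_integral_lborel4_times) (auto simp: nn_integral_cmult ennreal_mult)
  finally show ?thesis .
qed

lemma emeasure_joint_law_ge:
  assumes "0 < lam" "0 < RD" and S: "S \<in> sets lborel4"
    and "0 \<le> \<alpha>" "\<alpha> \<le> 1" "0 \<le> \<beta>" "\<beta> \<le> 1" "0 \<le> g"
    and g: "\<And>r. RD / 2 \<le> r \<Longrightarrow> r \<le> RD \<Longrightarrow> g \<le> nearest_density lam RD r"
    and box: "\<And>a b c r. 0 \<le> a \<Longrightarrow> a < \<alpha> \<Longrightarrow> 0 \<le> b \<Longrightarrow> b < \<beta> \<Longrightarrow> RD / 2 \<le> r \<Longrightarrow> r \<le> RD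
      \<Longrightarrow> (a, b, c, r) \<in> S"
  shows "ennreal (exp (-1) * \<alpha> * (exp (-1) * \<beta>) * (g * (RD / 2))) \<le> emeasure (joint_law lam RD) S"
proof -
  define H :: "real \<times> real \<Rightarrow> ennreal"
    where "H = (\<lambda>(b, c). ennreal (exp (-1)) * indicator {0..<\<beta>} b * ennreal (exponential_density 1 c))"
  have [measurable]: "H \<in> borel_measurable lborel2" unfolding H_def by measurable
  have "(\<integral>\<^sup>+x. H x \<partial>lborel2) = (\<integral>\<^sup>+b. ennreal (exp (-1)) * indicator {0..<\<beta>} b \<partial>lborel)"
    by (simp add: nn_integral_pair_measure_iterated lborel.sigma_finite_measure_axioms H_def
        nn_integral_cmult nn_integral_exponential_density)
  also have "\<dots> = ennreal (exp (-1) * \<beta>)" using assms(6) by (simp add: nn_integral_cmult ennreal_mult)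
  finally have IH: "(\<integral>\<^sup>+x. H x \<partial>lborel2) = ennreal (exp (-1) * \<beta>)" .
  have IA: "(\<integral>\<^sup>+a. ennreal (exp (-1)) * indicator {0..<\<alpha>} a \<partial>lborel) = ennreal (exp (-1) * \<alpha>)"
    using assms(4) by (simp add: nn_integral_cmult ennreal_mult)
  have IR: "(\<integral>\<^sup>+r. ennreal g * indicator {RD/2..RD} r \<partial>lborel) = ennreal (g * (RD / 2))"
    using assms(2,8) by (simp add: nn_integral_cmult ennreal_mult[symmetric])
  have "ennreal (exp (-1) * \<alpha> * (exp (-1) * \<beta>) * (g * (RD / 2)))
      = (\<integral>\<^sup>+a. ennreal (exp (-1)) * indicator {0..<\<alpha>} a \<partial>lborel) * (\<integral>\<^sup>+x. H x \<partial>lborel2)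
        * (\<integral>\<^sup>+r. ennreal g * indicator {RD/2..RD} r \<partial>lborel)"
    unfolding IA IH IR using assms(2,4,6,8) by (simp add: ennreal_mult[symmetric] mult_ac)
  also have "\<dots> = (\<integral>\<^sup>+(a, b, c, r). (ennreal (exp (-1)) * indicator {0..<\<alpha>} a) * H (b, c)
      * (ennreal g * indicator {RD/2..RD} r) \<partial>lborel4)"
    by (rule nn_integral_lborel4_times[symmetric]) auto
  also have "\<dots> \<le> (\<integral>\<^sup>+z. joint_density lam RD z * indicator S z \<partial>lborel4)"
  proof -
    have pointwise: "ennreal (exp (-1)) * indicator {0..<\<alpha>} a * H (b, c) * (ennreal g * indicator {RD/2..RD} r)
        \<le> joint_density lam RD (a, b, c, r) * indicator S (a, b, c, r)" for a b c r
    proof (cases "0 \<le> a \<and> a < \<alpha> \<and> 0 \<le> b \<and> b < \<beta> \<and> RD / 2 \<le> r \<and> r \<le> RD")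
      case True
      have "exp (-1) * exp (-1) * exponential_density 1 c * g
          \<le> exponential_density 1 a * exponential_density 1 b * exponential_density 1 c * nearest_density lam RD r"
        using True assms(5,7,8) g
        by (intro mult_mono) (auto simp: exp_minus_1_le_exponential_density_1 exponential_density_nonneg)
      then show ?thesis
        using True box assms(8)
        by (simp add: H_def ennreal_mult' [symmetric] exponential_density_nonneg ennreal_leI mult_ac)
    qed (auto simp: H_def)
    then show ?thesis by (intro nn_integral_mono) (simp add: split_paired_all)
  qed
  also have "\<dots> = emeasure (joint_law lam RD) S"
    by (rule emeasure_joint_law[OF S, symmetric])
  finally show ?thesis .
qed

definition decode_outage_set :: "real \<Rightarrow> real \<Rightarrow> real \<Rightarrow> (real \<times> real \<times> real \<times> real) set" where
  "decode_outage_set d eta e = {(a, b, c, r).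
     a / (1 + d\<^sup>2) + eta * (c / (1 + d\<^sup>2)) * (b / (1 + r\<^sup>2) - e) < e \<and> b / (1 + r\<^sup>2) > e}"

definition no_decode_outage_set :: "real \<Rightarrow> real \<Rightarrow> (real \<times> real \<times> real \<times> real) set" where
  "no_decode_outage_set d e = {(a, b, c, r). a / (1 + d\<^sup>2) < e \<and> b / (1 + r\<^sup>2) < e}"

lemma P2_eq_outage_sets:
  "P2 lam RD d eta Rt P = measure (joint_law lam RD) (decode_outage_set d eta (eps_of Rt P))
     + measure (joint_law lam RD) (no_decode_outage_set d (eps_of Rt P))"
  unfolding P2_def decode_outage_set_def no_decode_outage_set_def ..

lemma decode_outage_set_in_sets: "decode_outage_set d eta e \<in> sets lborel4"
  unfolding decode_outage_set_def by (rule Collect_in_sets_if_pred) (simp_all add: space_pair_measure)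

lemma no_decode_outage_set_in_sets: "no_decode_outage_set d e \<in> sets lborel4"
  unfolding no_decode_outage_set_def by (rule Collect_in_sets_if_pred) (simp_all add: space_pair_measure)

lemma emeasure_no_decode_outage_set_le:
  assumes "0 < lam" "0 < RD" "0 < e"
    and G: "\<And>r. nearest_density lam RD r \<le> G"
  shows "emeasure (joint_law lam RD) (no_decode_outage_set d e)
    \<le> ennreal ((1 + d\<^sup>2) * (1 + RD\<^sup>2) * (G * RD) * e\<^sup>2)"
proof -
  define H :: "real \<times> real \<Rightarrow> ennreal"
    where "H = (\<lambda>(b, c). indicator {0..(1 + RD\<^sup>2) * e} b * ennreal (exponential_density 1 c))"
  have [measurable]: "H \<in> borel_measurable lborel2" unfolding H_def by measurable
  have "(\<integral>\<^sup>+x. H x \<partial>lborel2) = ennreal ((1 + RD\<^sup>2) * e)"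
    using assms(3) by (simp add: nn_integral_pair_measure_iterated lborel.sigma_finite_measure_axioms
        H_def nn_integral_cmult nn_integral_exponential_density)
  moreover have "emeasure (joint_law lam RD) (no_decode_outage_set d e)
      \<le> ennreal ((1 + d\<^sup>2) * e) * (\<integral>\<^sup>+x. H x \<partial>lborel2) * ennreal (G * RD)"
  proof (rule emeasure_joint_law_le[OF assms(1,2) no_decode_outage_set_in_sets _ _ G])
    fix a b c r assume S: "(a, b, c, r) \<in> no_decode_outage_set d e"
      and "0 \<le> b" "0 \<le> r" "r \<le> RD"
    have pos: "0 < 1 + r\<^sup>2" "0 < 1 + d\<^sup>2" by (simp_all add: add_pos_nonneg)
    have "b < (1 + r\<^sup>2) * e"
      using S pos by (simp add: no_decode_outage_set_def divide_less_eq mult.commute)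
    also have "\<dots> \<le> (1 + RD\<^sup>2) * e"
      using \<open>0 \<le> r\<close> \<open>r \<le> RD\<close> assms(3) by (intro mult_right_mono) (auto intro: power_mono)
    finally show "a \<le> (1 + d\<^sup>2) * e
        \<and> ennreal (exponential_density 1 b * exponential_density 1 c) \<le> H (b, c)"
      using S pos \<open>0 \<le> b\<close>
      by (auto simp: no_decode_outage_set_def divide_less_eq mult.commute H_def
          exponential_density_1_le_1 exponential_density_nonneg intro!: ennreal_leI mult_left_le_one_le)
  qed (use assms(3) in auto)
  ultimately show ?thesis
    using assms(2,3) nonneg_if_nearest_density_le[OF G]
    by (simp add: ennreal_mult[symmetric] power2_eq_square mult_ac)
qed

lemma measure_no_decode_outage_set_le:
  assumes "0 < lam" "0 < RD" "0 < e"
    and G: "\<And>r. nearest_density lam RD r \<le> G"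
  shows "measure (joint_law lam RD) (no_decode_outage_set d e) \<le> (1 + d\<^sup>2) * (1 + RD\<^sup>2) * (G * RD) * e\<^sup>2"
  unfolding measure_def using assms(2) nonneg_if_nearest_density_le[OF G]
  by (intro enn2real_leI emeasure_no_decode_outage_set_le[OF assms]) auto

lemma measure_no_decode_outage_set_ge:
  assumes "0 < lam" "0 < RD" "0 < e" "e \<le> 1" "0 \<le> g"
    and g: "\<And>r. RD / 2 \<le> r \<Longrightarrow> r \<le> RD \<Longrightarrow> g \<le> nearest_density lam RD r"
  shows "exp (-1) * exp (-1) * (g * (RD / 2)) * e\<^sup>2 \<le> measure (joint_law lam RD) (no_decode_outage_set d e)"
proof -
  obtain G where "\<And>r. nearest_density lam RD r \<le> G"
    using nearest_density_bounded[OF assms(1,2)] by blast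
  then have finite: "emeasure (joint_law lam RD) (no_decode_outage_set d e) < \<top>"
    using emeasure_no_decode_outage_set_le[OF assms(1-3)] le_less_trans ennreal_less_top by blast
  have "ennreal (exp (-1) * e * (exp (-1) * e) * (g * (RD / 2)))
      \<le> emeasure (joint_law lam RD) (no_decode_outage_set d e)"
  proof (rule emeasure_joint_law_ge[OF assms(1,2) no_decode_outage_set_in_sets _ assms(4) _ assms(4,5) g])
    fix a b c r assume "0 \<le> a" "a < e" "0 \<le> b" "b < e"
    have "a / (1 + d\<^sup>2) \<le> a" "b / (1 + r\<^sup>2) \<le> b"
      using \<open>0 \<le> a\<close> \<open>0 \<le> b\<close> by (simp_all add: divide_le_eq mult_le_cancel_left1 add_pos_nonneg)
    then show "(a, b, c, r) \<in> no_decode_outage_set d e"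
      using \<open>a < e\<close> \<open>b < e\<close> by (simp add: no_decode_outage_set_def)
  qed (use assms(3) in auto)
  then have "enn2real (ennreal (exp (-1) * e * (exp (-1) * e) * (g * (RD / 2))))
      \<le> measure (joint_law lam RD) (no_decode_outage_set d e)"
    unfolding measure_def using finite by (rule enn2real_mono)
  then show ?thesis using assms(2,3,5) by (simp add: power2_eq_square mult_ac)
qed

text \<open>
  Dominates \<open>e\<^sup>-\<^sup>b e\<^sup>-\<^sup>c\<close> on \<open>{c (b - s) < t}\<close>: for \<open>b \<le> s + t\<close> drop the constraint and
  \<open>e\<^sup>-\<^sup>b\<close>; for \<open>s + t \<le> b \<le> s + 1\<close> use \<open>c < t / (b - s)\<close> and drop both densities;
  for \<open>b > s + 1\<close> use \<open>c < t\<close> and drop \<open>e\<^sup>-\<^sup>c\<close>.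
\<close>
definition hyperbola_envelope :: "real \<Rightarrow> real \<Rightarrow> real \<times> real \<Rightarrow> ennreal" where
  "hyperbola_envelope s t = (\<lambda>(b, c).
     indicator {0..s + t} b * ennreal (exponential_density 1 c)
     + of_bool (s + t \<le> b \<and> b \<le> s + 1 \<and> 0 \<le> c \<and> c \<le> t / (b - s))
     + ennreal (exponential_density 1 b) * indicator {0..t} c)"

lemma borel_measurable_hyperbola_envelope [measurable]:
  "hyperbola_envelope s t \<in> borel_measurable lborel2"
  unfolding hyperbola_envelope_def by measurable

lemma exponential_pair_le_hyperbola_envelope:
  assumes "0 \<le> b" "0 \<le> c" "0 < t" and hyp: "c * (b - s) < t"
  shows "ennreal (exponential_density 1 b * exponential_density 1 c) \<le> hyperbola_envelope s t (b, c)"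
proof -
  have le_c: "exponential_density 1 b * exponential_density 1 c \<le> exponential_density 1 c"
    and le_b: "exponential_density 1 b * exponential_density 1 c \<le> exponential_density 1 b"
    and le_1: "exponential_density 1 b * exponential_density 1 c \<le> 1"
    by (auto intro: mult_left_le_one_le mult_right_le_one_le mult_le_one
        simp: exponential_density_nonneg exponential_density_1_le_1)
  consider "b \<le> s + t" | "s + t < b" "b \<le> s + 1" | "s + 1 < b" by linarith
  then show ?thesis
  proof cases
    case 1
    then have "ennreal (exponential_density 1 b * exponential_density 1 c)
        \<le> indicator {0..s + t} b * ennreal (exponential_density 1 c)"
      using assms(1) le_c by (simp add: ennreal_leI)
    then show ?thesis unfolding hyperbola_envelope_def by (simp add: add.assoc add_increasing2)
  next
    case 2
    then have "c \<le> t / (b - s)" using hyp assms(3) by (simp add: field_simps)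
    then have "ennreal (exponential_density 1 b * exponential_density 1 c)
        \<le> of_bool (s + t \<le> b \<and> b \<le> s + 1 \<and> 0 \<le> c \<and> c \<le> t / (b - s))"
      using 2 assms(2) le_1 by (simp add: ennreal_leI)
    then show ?thesis unfolding hyperbola_envelope_def by (simp add: add_increasing add_increasing2)
  next
    case 3
    then have "c \<le> c * (b - s)" using assms(2) by (simp add: mult_le_cancel_left1)
    then have "c \<le> t" using hyp by simp
    then have "ennreal (exponential_density 1 b * exponential_density 1 c)
        \<le> ennreal (exponential_density 1 b) * indicator {0..t} c"
      using assms(2) le_b by (simp add: ennreal_leI)
    then show ?thesis unfolding hyperbola_envelope_def by (simp add: add_increasing)
  qed
qed

lemma nn_integral_inverse_distance:
  assumes "0 < t" "t \<le> 1"
  shows "(\<integral>\<^sup>+b. ennreal (t / (b - s)) * indicator {s + t..s + 1} b \<partial>lborel) = ennreal (- t * ln t)"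
proof -
  have "(\<integral>\<^sup>+b. ennreal (t / (b - s)) * indicator {s + t..s + 1} b \<partial>lborel)
      = ennreal (t * ln ((s + 1) - s) - t * ln ((s + t) - s))"
  proof (rule nn_integral_FTC_Icc[where F="\<lambda>b. t * ln (b - s)"])
    fix x :: real assume "x \<in> {s + t..s + 1}"
    then have x: "0 < x - s" using assms by simp
    then show "((\<lambda>b. t * ln (b - s)) has_real_derivative t / (x - s)) (at x)"
      by (auto intro!: derivative_eq_intros simp: field_simps)
    show "0 \<le> t / (x - s)" using x assms by simp
  qed (use assms in auto)
  then show ?thesis by simp
qed

lemma nn_integral_hyperbola_envelope:
  assumes "0 \<le> s" "0 < t" "t \<le> 1"
  shows "(\<integral>\<^sup>+x. hyperbola_envelope s t x \<partial>lborel2) = ennreal (s + 2 * t - t * ln t)"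
proof -
  have inner: "(\<integral>\<^sup>+c. hyperbola_envelope s t (b, c) \<partial>lborel)
      = indicator {0..s + t} b + ennreal (t / (b - s)) * indicator {s + t..s + 1} b
        + ennreal (exponential_density 1 b) * ennreal t" for b
  proof -
    have "(\<lambda>c. of_bool (s + t \<le> b \<and> b \<le> s + 1 \<and> 0 \<le> c \<and> c \<le> t / (b - s)) :: ennreal)
        = (\<lambda>c. indicator {s + t..s + 1} b * indicator {0..t / (b - s)} c)"
      by (auto simp: indicator_def)
    moreover have "(\<integral>\<^sup>+c. indicator {s + t..s + 1} b * indicator {0..t / (b - s)} c \<partial>lborel)
        = ennreal (t / (b - s)) * indicator {s + t..s + 1} b"
      using assms(2) by (cases "b \<in> {s + t..s + 1}") (simp_all add: nn_integral_cmult)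
    ultimately show ?thesis
      using assms(2) unfolding hyperbola_envelope_def
      by (simp add: nn_integral_add nn_integral_cmult nn_integral_exponential_density)
  qed
  have "(\<integral>\<^sup>+x. hyperbola_envelope s t x \<partial>lborel2)
      = (\<integral>\<^sup>+b. indicator {0..s + t} b + ennreal (t / (b - s)) * indicator {s + t..s + 1} b
          + ennreal (exponential_density 1 b) * ennreal t \<partial>lborel)"
    by (simp add: nn_integral_pair_measure_iterated lborel.sigma_finite_measure_axioms inner)
  also have "\<dots> = ennreal (s + t) + ennreal (- t * ln t) + ennreal t"
    using assms by (simp add: nn_integral_add nn_integral_multc nn_integral_exponential_density
        nn_integral_inverse_distance)
  also have "\<dots> = ennreal (s + 2 * t - t * ln t)"
  proof -
    have "0 \<le> - t * ln t" using assms by (simp add: mult_nonneg_nonpos)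
    then show ?thesis using assms by (simp add: ennreal_plus[symmetric] del: ennreal_plus)
  qed
  finally show ?thesis .
qed

lemma decode_outage_set_bounds:
  assumes S: "(a, b, c, r) \<in> decode_outage_set d eta e"
    and "0 < eta" "0 < e" "0 \<le> a" "0 \<le> c" "0 \<le> r" "r \<le> RD"
  shows "a \<le> (1 + d\<^sup>2) * e" and "c * (b - (1 + RD\<^sup>2) * e) < (1 + RD\<^sup>2) * (1 + d\<^sup>2) * e / eta"
proof -
  define D where "D = 1 + d\<^sup>2"
  define q where "q = 1 + r\<^sup>2"
  define K where "K = 1 + RD\<^sup>2"
  have D: "0 < D" and q: "1 \<le> q" "q \<le> K"
    unfolding D_def q_def K_def using assms(6,7) by (auto intro: add_pos_nonneg power_mono)
  have direct: "a / D + eta * (c / D) * (b / q - e) < e" and relay: "e < b / q"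
    using S by (simp_all add: decode_outage_set_def D_def q_def)
  have "0 \<le> eta * (c / D) * (b / q - e)" using relay assms(2,5) D by simp
  then have "a / D < e" using direct by linarith
  then show "a \<le> (1 + d\<^sup>2) * e" using D by (simp add: D_def field_simps)
  have "0 \<le> a / D" using assms(4) D by simp
  then have "eta * (c / D) * (b / q - e) < e" using direct by linarith
  then have "eta * c * (b - q * e) < q * D * e"
    using D q by (simp add: field_simps)
  also have "\<dots> \<le> K * D * e" using q D assms(3) by (intro mult_right_mono) auto
  finally have "eta * c * (b - q * e) < K * D * e" .
  moreover have "eta * c * (b - K * e) \<le> eta * c * (b - q * e)"
    using q assms(2,3,5) by (intro mult_left_mono) auto
  ultimately have "eta * (c * (b - K * e)) < K * D * e" by simp
  then show "c * (b - (1 + RD\<^sup>2) * e) < (1 + RD\<^sup>2) * (1 + d\<^sup>2) * e / eta"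
    using assms(2) by (simp add: K_def D_def field_simps)
qed

lemma measure_decode_outage_set_le:
  fixes d :: real
  assumes "0 < lam" "0 < RD" "0 < eta" "0 < e"
    and G: "\<And>r. nearest_density lam RD r \<le> G"
  defines "k \<equiv> (1 + RD\<^sup>2) * (1 + d\<^sup>2) / eta"
  assumes small: "k * e \<le> 1"
  shows "measure (joint_law lam RD) (decode_outage_set d eta e)
    \<le> e\<^sup>2 * ((1 + d\<^sup>2) * (G * RD) * (1 + RD\<^sup>2 + 2 * k - k * ln k - k * ln e))"
proof -
  define s where "s = (1 + RD\<^sup>2) * e"
  define t where "t = k * e"
  have G0: "0 \<le> G" using nonneg_if_nearest_density_le[OF G] .
  have "0 < 1 + RD\<^sup>2" "0 < 1 + d\<^sup>2" by (simp_all add: add_pos_nonneg)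
  then have "0 < k" and st: "0 \<le> s" "0 < t" "t \<le> 1"
    unfolding s_def t_def using assms(3,4) small by (simp_all add: k_def)
  have "0 \<le> - t * ln t" using st by (simp add: mult_nonneg_nonpos)
  then have nonneg: "0 \<le> s + 2 * t - t * ln t" using st by linarith
  have "emeasure (joint_law lam RD) (decode_outage_set d eta e)
      \<le> ennreal ((1 + d\<^sup>2) * e) * (\<integral>\<^sup>+x. hyperbola_envelope s t x \<partial>lborel2) * ennreal (G * RD)"
  proof (rule emeasure_joint_law_le[OF assms(1,2) decode_outage_set_in_sets _ _ G])
    fix a b c r assume S: "(a, b, c, r) \<in> decode_outage_set d eta e"
      and "0 \<le> a" "0 \<le> b" "0 \<le> c" "0 \<le> r" "r \<le> RD"
    then show "a \<le> (1 + d\<^sup>2) * e \<and> ennreal (exponential_density 1 b * exponential_density 1 c)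
        \<le> hyperbola_envelope s t (b, c)"
      using decode_outage_set_bounds[OF S assms(3,4)] st
      by (auto simp: s_def t_def k_def intro!: exponential_pair_le_hyperbola_envelope)
  qed (use assms(4) in auto)
  also have "\<dots> = ennreal ((1 + d\<^sup>2) * e * (s + 2 * t - t * ln t) * (G * RD))"
    using nn_integral_hyperbola_envelope[OF st] nonneg assms(2,4) G0
    by (simp add: ennreal_mult[symmetric])
  finally have "measure (joint_law lam RD) (decode_outage_set d eta e)
      \<le> (1 + d\<^sup>2) * e * (s + 2 * t - t * ln t) * (G * RD)"
    unfolding measure_def using nonneg assms(2,4) G0 by (intro enn2real_leI) auto
  moreover have "ln t = ln k + ln e" unfolding t_def using \<open>0 < k\<close> assms(4) by (simp add: ln_mult)
  ultimately show ?thesis by (simp add: s_def t_def power2_eq_square algebra_simps)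
qed

lemma eventually_eps_of_small:
  assumes "0 < Rt" "0 < k"
  shows "\<forall>\<^sub>F P in at_top. 0 < eps_of Rt P \<and> eps_of Rt P \<le> 1 \<and> k * eps_of Rt P \<le> 1"
proof -
  have eps: "eps_of Rt = (\<lambda>P. (2 powr (2 * Rt) - 1) / P)" by (simp add: eps_of_def fun_eq_iff)
  have "(eps_of Rt \<longlongrightarrow> 0) at_top" unfolding eps by real_asymp
  then have "\<forall>\<^sub>F P in at_top. eps_of Rt P < min 1 (1 / k)"
    using assms(2) by (intro order_tendstoD) auto
  moreover have "\<forall>\<^sub>F P in at_top. 0 < eps_of Rt P"
    using eventually_gt_at_top[of 0] by (rule eventually_mono) (use assms(1) in \<open>simp add: eps\<close>)
  ultimately show ?thesis
    by eventually_elim (use assms(2) in \<open>auto simp: field_simps\<close>)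
qed

lemma P2_asymptotic_bounds:
  assumes "0 < lam" "0 < RD" "0 < eta" "0 < Rt"
  obtains L A B where "0 < L" "0 < B"
    "\<forall>\<^sub>F P in at_top. L * (eps_of Rt P)\<^sup>2 \<le> P2 lam RD d eta Rt P
       \<and> P2 lam RD d eta Rt P \<le> (eps_of Rt P)\<^sup>2 * (A - B * ln (eps_of Rt P))"
proof -
  obtain G where G: "0 < G" "\<And>r. nearest_density lam RD r \<le> G"
    using nearest_density_bounded[OF assms(1,2)] by blast
  obtain g where g: "0 < g" "\<And>r. RD / 2 \<le> r \<Longrightarrow> r \<le> RD \<Longrightarrow> g \<le> nearest_density lam RD r"
    using nearest_density_bounded_below[OF assms(1,2)] by blast
  define k where "k = (1 + RD\<^sup>2) * (1 + d\<^sup>2) / eta"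
  define M where "M = (1 + d\<^sup>2) * (G * RD)"
  define L where "L = exp (-1) * exp (-1) * (g * (RD / 2))"
  define A where "A = M * (2 * (1 + RD\<^sup>2) + 2 * k - k * ln k)"
  define B where "B = M * k"
  have "0 < 1 + RD\<^sup>2" "0 < 1 + d\<^sup>2" by (simp_all add: add_pos_nonneg)
  then have "0 < k" "0 < L" "0 < B"
    unfolding k_def L_def B_def M_def using assms(2,3) G(1) g(1) by simp_all
  moreover have "\<forall>\<^sub>F P in at_top. L * (eps_of Rt P)\<^sup>2 \<le> P2 lam RD d eta Rt P
      \<and> P2 lam RD d eta Rt P \<le> (eps_of Rt P)\<^sup>2 * (A - B * ln (eps_of Rt P))"
    using eventually_eps_of_small[OF assms(4) \<open>0 < k\<close>]
  proof eventually_elim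
    case (elim P)
    define e where "e = eps_of Rt P"
    have e: "0 < e" "e \<le> 1" "k * e \<le> 1" using elim by (simp_all add: e_def)
    have P2_e: "P2 lam RD d eta Rt P = measure (joint_law lam RD) (decode_outage_set d eta e)
        + measure (joint_law lam RD) (no_decode_outage_set d e)"
      unfolding e_def by (rule P2_eq_outage_sets)
    have "L * e\<^sup>2 \<le> measure (joint_law lam RD) (no_decode_outage_set d e)"
      using measure_no_decode_outage_set_ge[OF assms(1,2) e(1,2) less_imp_le[OF g(1)] g(2), of d]
      by (simp add: L_def)
    then have "L * e\<^sup>2 \<le> P2 lam RD d eta Rt P"
      using P2_e measure_nonneg[of "joint_law lam RD" "decode_outage_set d eta e"] by linarith
    moreover have "P2 lam RD d eta Rt P \<le> e\<^sup>2 * (A - B * ln e)"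
      using P2_e measure_decode_outage_set_le[OF assms(1,2,3) e(1) G(2) e(3)[unfolded k_def]]
        measure_no_decode_outage_set_le[OF assms(1,2) e(1) G(2), of d]
      by (simp add: A_def B_def M_def k_def algebra_simps power2_eq_square)
    ultimately show ?case by (simp add: e_def)
  qed
  ultimately show ?thesis using that by blast
qed

lemma tendsto_neg_ln_div_ln_eq_2:
  fixes p :: "real \<Rightarrow> real"
  assumes "0 < tau" "0 < L" "0 < B"
    and bounds: "\<forall>\<^sub>F P in at_top. L * (tau / P)\<^sup>2 \<le> p P \<and> p P \<le> (tau / P)\<^sup>2 * (A - B * ln (tau / P))"
  shows "((\<lambda>P. - (ln (p P) / ln P)) \<longlongrightarrow> 2) at_top"
proof -
  have lower: "((\<lambda>P. ln (L * (tau / P)\<^sup>2) / ln P) \<longlongrightarrow> -2) at_top"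
    using assms(1,2) by real_asymp
  have upper: "((\<lambda>P. ln ((tau / P)\<^sup>2 * (A - B * ln (tau / P))) / ln P) \<longlongrightarrow> -2) at_top"
    using assms(1,3) by real_asymp
  have "\<forall>\<^sub>F P in at_top. ln (L * (tau / P)\<^sup>2) / ln P \<le> ln (p P) / ln P
      \<and> ln (p P) / ln P \<le> ln ((tau / P)\<^sup>2 * (A - B * ln (tau / P))) / ln P"
    using bounds eventually_gt_at_top[of 1]
  proof eventually_elim
    case (elim P)
    have "0 < L * (tau / P)\<^sup>2" using assms(1,2) elim by simp
    then show ?case
      using elim by (auto intro!: divide_right_mono simp del: ln_mult)
  qed
  then have "((\<lambda>P. ln (p P) / ln P) \<longlongrightarrow> -2) at_top"
    by (intro tendsto_sandwich[OF _ _ lower upper]) (auto elim: eventually_mono)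
  then show ?thesis
    using tendsto_minus by fastforce
qed

theorem theorem2:
  fixes lam RD d eta Rt :: real
  assumes "lam > 0" and "RD > 0" and "d > 0" and "0 < eta" and "eta \<le> 1" and "Rt > 0"
  shows "((\<lambda>P. - (ln (P2 lam RD d eta Rt P) / ln P)) \<longlongrightarrow> 2) at_top"
proof -
  obtain L A B where "0 < L" "0 < B" and bounds:
    "\<forall>\<^sub>F P in at_top. L * (eps_of Rt P)\<^sup>2 \<le> P2 lam RD d eta Rt P
       \<and> P2 lam RD d eta Rt P \<le> (eps_of Rt P)\<^sup>2 * (A - B * ln (eps_of Rt P))"
    using P2_asymptotic_bounds[OF assms(1,2,4,6)] by blast
  have "0 < 2 powr (2 * Rt) - 1" using assms(6) by simp
  from tendsto_neg_ln_div_ln_eq_2[OF this \<open>0 < L\<close> \<open>0 < B\<close>] bounds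
  show ?thesis by (simp add: eps_of_def)
qed

end
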